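(* Let $G$ be a topological group such that $G^{\omega}$ is selectively pseudocompact. Then $G^{\kappa}$ is selectively pseudocompact for every cardinal $\kappa \geq \omega$.
   Context: All topological groups are Hausdorff. A space $X$ is selectively pseudocompact if for every sequence $\{U_n:n\in\omega\}$ of nonempty open subsets of $X$ there are points $x_n\in U_n$ ($n\in\omega$) such that the sequence $\{x_n:n\in\omega\}$ has an accumulation point in $X$ (equivalently, there are $x\in X$ and a free ultrafilter $p$ on $\omega$ with $x=p\text{-}\lim_n x_n$, i.e. $\{n: x_n\in U\}\in p$ for every neighbourhood $U$ of $x$). Powers carry the product topology. *)

theory Defs
  imports "HOL-Analysis.Analysis"
begin

definition selectively_pseudocompact :: "'a topology \<Rightarrow> bool" where
  "selectively_pseudocompact X \<longleftrightarrow>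
     (\<forall>U :: nat \<Rightarrow> 'a set. (\<forall>n. openin X (U n) \<and> U n \<noteq> {}) \<longrightarrow>
        (\<exists>x :: nat \<Rightarrow> 'a. (\<forall>n. x n \<in> U n) \<and>
           (\<exists>y \<in> topspace X. \<forall>V. openin X V \<and> y \<in> V \<longrightarrow> infinite {n. x n \<in> V})))"

end

theory Submission
  imports Defs
begin

text \<open>A sequence of nonempty open sets in \<open>G\<^sup>\<kappa>\<close> is controlled by countably many
coordinates, since each basic open set depends on finitely many. Enumerating those
coordinates gives a continuous reindexing map \<open>G\<^sup>\<omega> \<rightarrow> G\<^sup>\<kappa>\<close> whose preimages of the
given sets are nonempty; selecting points in \<open>G\<^sup>\<omega>\<close> and pushing them forward transports
the accumulation point.\<close>

lemma selectively_pseudocompact_from_pullbacks: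
  assumes "selectively_pseudocompact X"
    and "\<And>U :: nat \<Rightarrow> _. \<forall>n. openin Y (U n) \<and> U n \<noteq> {} \<Longrightarrow>
           \<exists>f. continuous_map X Y f \<and> (\<forall>n. \<exists>z \<in> topspace X. f z \<in> U n)"
  shows "selectively_pseudocompact Y"
  unfolding selectively_pseudocompact_def
proof (intro allI impI)
  fix U :: "nat \<Rightarrow> _" assume U: "\<forall>n. openin Y (U n) \<and> U n \<noteq> {}"
  then obtain f where f: "continuous_map X Y f"
    and meets: "\<And>n. \<exists>z \<in> topspace X. f z \<in> U n"
    using assms(2)[of U] by blast
  define P where "P n = {z \<in> topspace X. f z \<in> U n}" for n
  have "openin X (P n) \<and> P n \<noteq> {}" for n
    using U meets[of n] openin_continuous_map_preimage[OF f] unfolding P_def by blast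
  with assms(1) obtain x y where x: "\<And>n. x n \<in> P n" and y: "y \<in> topspace X"
    and acc: "\<And>V. openin X V \<and> y \<in> V \<Longrightarrow> infinite {n. x n \<in> V}"
    unfolding selectively_pseudocompact_def by blast
  show "\<exists>x. (\<forall>n. x n \<in> U n) \<and>
          (\<exists>y \<in> topspace Y. \<forall>V. openin Y V \<and> y \<in> V \<longrightarrow> infinite {n. x n \<in> V})"
  proof (intro exI conjI allI impI bexI)
    show "f (x n) \<in> U n" for n using x unfolding P_def by blast
    show "f y \<in> topspace Y" using f y by (meson continuous_map_def funcset_mem)
    fix V assume "openin Y V \<and> f y \<in> V"
    then have "infinite {n. x n \<in> {z \<in> topspace X. f z \<in> V}}"
      using y by (intro acc) (simp add: openin_continuous_map_preimage[OF f])
    then show "infinite {n. f (x n) \<in> V}"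
      by (rule infinite_super[rotated]) auto
  qed
qed

lemma openin_product_topology_finite_support:
  assumes "openin (product_topology (\<lambda>_. (euclidean :: 'a::topological_space topology)) UNIV) U"
    and "u \<in> U"
  obtains F where "finite F" and "\<And>v. \<forall>i \<in> F. v i = u i \<Longrightarrow> v \<in> U"
proof -
  obtain W where W: "finite {i. W i \<noteq> UNIV}" "u \<in> PiE UNIV W" "PiE UNIV W \<subseteq> U"
    using assms unfolding openin_product_topology_alt by force
  show ?thesis
  proof
    fix v assume agree: "\<forall>i \<in> {i. W i \<noteq> UNIV}. v i = u i"
    have "v i \<in> W i" for i
      using W(2) agree by (cases "W i = UNIV") (auto simp: PiE_iff)
    then have "v \<in> PiE UNIV W" by (simp add: PiE_iff)
    then show "v \<in> U" using W(3) by blast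
  qed (fact W(1))
qed

lemma continuous_map_precompose:
  "continuous_map (product_topology (\<lambda>_. T) UNIV) (product_topology (\<lambda>_. T) UNIV) (\<lambda>z. z \<circ> g)"
  unfolding continuous_map_componentwise_UNIV comp_def
proof
  fix k
  show "continuous_map (product_topology (\<lambda>_. T) UNIV) T (\<lambda>z. z (g k))"
    using continuous_map_product_projection[of "g k" UNIV "\<lambda>_. T"] by simp
qed

lemma product_topology_open_sequence_countable_support:
  fixes U :: "nat \<Rightarrow> ('k \<Rightarrow> 'a::topological_space) set"
  assumes "\<forall>n. openin (product_topology (\<lambda>_. euclidean) UNIV) (U n) \<and> U n \<noteq> {}"
  obtains u C where "\<And>n. u n \<in> U n" and "countable C"
    and "\<And>n v. \<forall>i \<in> C. v i = u n i \<Longrightarrow> v \<in> U n"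
proof -
  have "\<forall>n. \<exists>x. x \<in> U n"
    using assms by blast
  then obtain u where u: "\<And>n. u n \<in> U n"
    by (auto dest!: choice)
  have "\<forall>n. \<exists>F. finite F \<and> (\<forall>v. (\<forall>i \<in> F. v i = u n i) \<longrightarrow> v \<in> U n)"
  proof
    fix n
    show "\<exists>F. finite F \<and> (\<forall>v. (\<forall>i \<in> F. v i = u n i) \<longrightarrow> v \<in> U n)"
      by (rule openin_product_topology_finite_support[OF conjunct1[OF spec[OF assms]] u]) blast
  qed
  then obtain F where F: "\<And>n. finite (F n)" "\<And>n v. \<forall>i \<in> F n. v i = u n i \<Longrightarrow> v \<in> U n"
    by (auto dest!: choice)
  show thesis
  proof
    show "countable (\<Union>n. F n)"
      using F(1) by (auto intro: countable_finite)
    show "v \<in> U n" if "\<forall>i \<in> (\<Union>n. F n). v i = u n i" for n v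
      using that by (intro F(2)) blast
  qed (fact u)
qed

theorem mainTheorem1:
  fixes G :: "'a :: {topological_group_add, t2_space} itself"
    and K :: "'k itself"
  assumes "selectively_pseudocompact
             (product_topology (\<lambda>_. (euclidean :: 'a topology)) (UNIV :: nat set))"
    and "infinite (UNIV :: 'k set)"
  shows "selectively_pseudocompact
           (product_topology (\<lambda>_. (euclidean :: 'a topology)) (UNIV :: 'k set))"
proof (rule selectively_pseudocompact_from_pullbacks[OF assms(1)])
  let ?G\<omega> = "product_topology (\<lambda>_. euclidean :: 'a topology) (UNIV :: nat set)"
  let ?G\<kappa> = "product_topology (\<lambda>_. euclidean :: 'a topology) (UNIV :: 'k set)"
  fix U :: "nat \<Rightarrow> ('k \<Rightarrow> 'a) set"
  assume U: "\<forall>n. openin ?G\<kappa> (U n) \<and> U n \<noteq> {}"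
  obtain u C where "\<And>n. u n \<in> U n" and "countable C"
    and support: "\<And>n v. \<forall>i \<in> C. v i = u n i \<Longrightarrow> v \<in> U n"
    by (rule product_topology_open_sequence_countable_support[OF U]) blast
  define e where "e = from_nat_into C"
  have C_range: "C \<subseteq> range e"
    unfolding e_def using \<open>countable C\<close> by (rule subset_range_from_nat_into)
  have "(u n \<circ> e) \<circ> inv e \<in> U n" for n
  proof (rule support, intro ballI)
    fix i assume "i \<in> C"
    then show "((u n \<circ> e) \<circ> inv e) i = u n i"
      using C_range by (auto simp: f_inv_into_f)
  qed
  then show "\<exists>f. continuous_map ?G\<omega> ?G\<kappa> f \<and> (\<forall>n. \<exists>z \<in> topspace ?G\<omega>. f z \<in> U n)"
    using continuous_map_precompose[of euclidean "inv e"]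
    by (intro exI[of _ "\<lambda>z. z \<circ> inv e"]) auto
qed

end
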